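(* In the permutation model $\mathcal{N}_{\mathbb{R}}$, the family $\mathcal{A}=\{A_n: n\in\omega\}$ is denumerable but has no partial multiple choice function. Consequently, $\mathbf{CAC}(\leq 2^{\aleph_0})$ is false in $\mathcal{N}_{\mathbb{R}}$.
   Context: Permutation model $\mathcal{N}_{\mathbb{R}}$: Let $\mathcal{M}$ be a model of $\mathbf{ZFA}+\mathbf{AC}$ whose set of atoms is $A=\bigcup_{n\in\omega}A_n$, a pairwise disjoint union, where $A_n=\{a_{n,x}:x\in\mathbb{R}\}$ and $x\mapsto a_{n,x}$ is a bijection (in $\mathcal{M}$). Let $\leq_n$ be the linear order on $A_n$ given by $a_{n,x}\leq_n a_{n,y}\iff x\le y$. Let $\mathcal{G}$ be the group of all permutations $\pi$ of $A$ such that for every $n$, $\pi\upharpoonright A_n$ is an order-automorphism of $\langle A_n,\leq_n\rangle$. Every permutation of $A$ extends to an $\in$-automorphism of $\mathcal{M}$. Let $\mathcal{I}$ be the ideal of all $E\subseteq A$ with $E\subseteq\bigcup_{n\in S}A_n$ for some finite $S\subseteq\omega$. For $x\in\mathcal{M}$, $\mathrm{sym}_{\mathcal{G}}(x)=\{\phi\in\mathcal{G}:\phi(x)=x\}$ and $\mathrm{fix}_{\mathcal{G}}(E)=\{\phi\in\mathcal{G}:\phi(t)=t \text{ for all } t\in E\}$. Then $\mathcal{N}_{\mathbb{R}}=\{x\in\mathcal{M}: \text{for every } t\in \mathrm{TC}(\{x\}) \text{ there is } E\in\mathcal{I} \text{ with } \mathrm{fix}_{\mathcal{G}}(E)\subseteq\mathrm{sym}_{\mathcal{G}}(t)\}$,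 where $\mathrm{TC}$ is transitive closure. A partial multiple choice function of a family $\{X_j:j\in J\}$ is a function $f$ defined on an infinite $I\subseteq J$ with $f(j)$ a non-empty finite subset of $X_j$ for $j\in I$. $\mathbf{CAC}(\leq 2^{\aleph_0})$: every denumerable family of non-empty sets, each equipotent to a subset of $\mathbb{R}$, has a choice function. *)

theory Defs
  imports Complex_Main
begin

text \<open>Atoms are pairs (n, x) :: nat \<times> real, standing for a_{n,x}; A_n = {n} \<times> UNIV.
  Natural numbers and reals are pure (kernel) objects, fixed by every permutation.\<close>

type_synonym atom = "nat \<times> real"

definition Alev :: "nat \<Rightarrow> atom set" where
  "Alev n = {a. fst a = n}"

definition Gperm :: "(atom \<Rightarrow> atom) set" where
  "Gperm = {\<pi>. bij \<pi> \<and> (\<forall>a. fst (\<pi> a) = fst a) \<and>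
     (\<forall>n x y. x \<le> y \<longleftrightarrow> snd (\<pi> (n, x)) \<le> snd (\<pi> (n, y)))}"

text \<open>fix_G(E) for E = union of finitely many levels (these sets are cofinal in the ideal I,
  so they suffice as supports).\<close>
definition fixlev :: "nat set \<Rightarrow> (atom \<Rightarrow> atom) set" where
  "fixlev S = {\<pi> \<in> Gperm. \<forall>a. fst a \<in> S \<longrightarrow> \<pi> a = a}"

text \<open>Action of a permutation on a set of pairs (n, F) with n pure and F a set of atoms
  (the graph of a function from a subset of omega to sets of atoms).\<close>
definition act_nat_sets :: "(atom \<Rightarrow> atom) \<Rightarrow> (nat \<times> atom set) set \<Rightarrow> (nat \<times> atom set) set" where
  "act_nat_sets \<pi> f = (\<lambda>(n, F). (n, \<pi> ` F)) ` f"

definition act_pure_atom :: "(atom \<Rightarrow> atom) \<Rightarrow> ('p \<times> atom) set \<Rightarrow> ('p \<times> atom) set" where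
  "act_pure_atom \<pi> g = (\<lambda>(x, a). (x, \<pi> a)) ` g"

text \<open>For the objects considered, every element of the transitive closure
  other than the object itself is either pure, an atom, a finite set of atoms, or a pair/set
  built from these (all automatically finitely supported: a finite set of atoms F is supported
  by the finitely many levels it meets), so membership reduces to the object itself having
  finite support.\<close>
definition in_NR_nat_sets :: "(nat \<times> atom set) set \<Rightarrow> bool" where
  "in_NR_nat_sets f \<longleftrightarrow> (\<forall>p\<in>f. finite (snd p)) \<and>
     (\<exists>S. finite S \<and> (\<forall>\<pi>\<in>fixlev S. act_nat_sets \<pi> f = f))"

definition in_NR_pure_atom :: "('p \<times> atom) set \<Rightarrow> bool" where
  "in_NR_pure_atom g \<longleftrightarrow> (\<exists>S. finite S \<and> (\<forall>\<pi>\<in>fixlev S. act_pure_atom \<pi> g = g))"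

definition pmcf :: "nat set \<Rightarrow> (nat \<Rightarrow> atom set) \<Rightarrow> bool" where
  "pmcf I F \<longleftrightarrow> infinite I \<and> (\<forall>n\<in>I. finite (F n) \<and> F n \<noteq> {} \<and> F n \<subseteq> Alev n)"

definition graph_on :: "'a set \<Rightarrow> ('a \<Rightarrow> 'b) \<Rightarrow> ('a \<times> 'b) set" where
  "graph_on I F = {(n, F n) | n. n \<in> I}"

end

theory Submission
  imports Defs
begin

text \<open>Every element of N_R is supported by finitely many levels. Translating a level A_n
  outside the support by 1 is an order automorphism of A_n, so it fixes the object; but it
  moves the maximum, hence every finite non-empty subset, of A_n. So no element of N_R can
  pick a finite non-empty subset of A_n for infinitely many n.\<close>

definition shift_level :: "nat \<Rightarrow> atom \<Rightarrow> atom" where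
  "shift_level k a = (fst a, if fst a = k then snd a + 1 else snd a)"

lemma bij_shift_level: "bij (shift_level k)"
proof (rule o_bij)
  let ?unshift = "\<lambda>a. (fst a, if fst a = k then snd a - 1 else snd a) :: atom"
  show "?unshift \<circ> shift_level k = id" "shift_level k \<circ> ?unshift = id"
    by (auto simp: shift_level_def fun_eq_iff)
qed

lemma shift_level_in_fixlev: "k \<notin> S \<Longrightarrow> shift_level k \<in> fixlev S"
  using bij_shift_level by (auto simp: fixlev_def Gperm_def shift_level_def)

lemma translation_not_invariant:
  fixes X :: "'a :: linordered_ab_group_add set"
  assumes "finite X" "X \<noteq> {}" "c > 0"
  shows "(\<lambda>x. x + c) ` X \<noteq> X"
proof
  assume invariant: "(\<lambda>x. x + c) ` X = X"
  have "Max X + c \<in> X"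
    using Max_in[OF assms(1,2)] invariant by blast
  then have "Max X + c \<le> Max X"
    by (rule Max_ge[OF assms(1)])
  with \<open>c > 0\<close> show False by simp
qed

lemma shift_level_image_neq:
  assumes "finite F" "F \<noteq> {}" "F \<subseteq> Alev k"
  shows "shift_level k ` F \<noteq> F"
proof
  assume "shift_level k ` F = F"
  moreover have "snd ` shift_level k ` F = (\<lambda>x. x + 1) ` snd ` F"
    using assms(3) by (force simp: shift_level_def Alev_def image_image)
  ultimately have "(\<lambda>x. x + 1) ` snd ` F = snd ` F" by simp
  with translation_not_invariant[of "snd ` F" "1 :: real"] assms(1,2) show False by simp
qed

lemma act_nat_sets_graph_on_fixed:
  assumes "act_nat_sets \<pi> (graph_on I F) = graph_on I F" "n \<in> I"
  shows "\<pi> ` F n = F n"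
proof -
  have "(n, \<pi> ` F n) \<in> act_nat_sets \<pi> (graph_on I F)"
    using assms(2) unfolding act_nat_sets_def graph_on_def by force
  then show ?thesis
    using assms(1) unfolding graph_on_def by auto
qed

lemma act_pure_atom_graph_on_fixed:
  assumes "act_pure_atom \<pi> (graph_on I c) = graph_on I c" "n \<in> I"
  shows "\<pi> (c n) = c n"
proof -
  have "(n, \<pi> (c n)) \<in> act_pure_atom \<pi> (graph_on I c)"
    using assms(2) unfolding act_pure_atom_def graph_on_def by force
  then show ?thesis
    using assms(1) unfolding graph_on_def by auto
qed

lemma Gperm_image_Alev:
  assumes "\<pi> \<in> Gperm"
  shows "\<pi> ` Alev n = Alev n"
proof
  have "surj \<pi>"
    using assms by (simp add: Gperm_def bij_is_surj)
  have level: "fst (\<pi> a) = fst a" for a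
    using assms unfolding Gperm_def by blast
  then show "\<pi> ` Alev n \<subseteq> Alev n"
    by (auto simp: Alev_def)
  show "Alev n \<subseteq> \<pi> ` Alev n"
  proof
    fix a assume "a \<in> Alev n"
    have "a = \<pi> (inv \<pi> a)"
      using \<open>surj \<pi>\<close> by (simp add: surj_f_inv_f)
    moreover from this have "inv \<pi> a \<in> Alev n"
      using \<open>a \<in> Alev n\<close> level unfolding Alev_def by (metis mem_Collect_eq)
    ultimately show "a \<in> \<pi> ` Alev n" by blast
  qed
qed

lemma bij_betw_Pair_Alev: "bij_betw (Pair n) (UNIV :: real set) (Alev n)"
  unfolding bij_betw_def inj_on_def Alev_def by (auto simp: image_iff intro: prod_eqI)

lemma in_NR_graph_Pair: "in_NR_pure_atom (graph_on (UNIV :: real set) (Pair n))"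
  unfolding in_NR_pure_atom_def
proof (intro exI[of _ "{n}"] conjI ballI)
  fix \<pi> assume "\<pi> \<in> fixlev {n}"
  then have "\<pi> (n, x) = (n, x)" for x
    unfolding fixlev_def by auto
  then show "act_pure_atom \<pi> (graph_on UNIV (Pair n)) = graph_on UNIV (Pair n)"
    unfolding act_pure_atom_def graph_on_def by (auto simp: image_iff)
qed simp

lemma no_pmcf_in_NR: "\<not> (\<exists>I F. pmcf I F \<and> in_NR_nat_sets (graph_on I F))"
proof
  assume "\<exists>I F. pmcf I F \<and> in_NR_nat_sets (graph_on I F)"
  then obtain I F S where pmcf: "pmcf I F" and "finite S"
    and supported: "\<forall>\<pi>\<in>fixlev S. act_nat_sets \<pi> (graph_on I F) = graph_on I F"
    unfolding in_NR_nat_sets_def by blast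
  from pmcf \<open>finite S\<close> have "infinite (I - S)"
    unfolding pmcf_def by simp
  then obtain n where "n \<in> I" "n \<notin> S"
    using infinite_imp_nonempty by blast
  have "act_nat_sets (shift_level n) (graph_on I F) = graph_on I F"
    using supported shift_level_in_fixlev[OF \<open>n \<notin> S\<close>] by blast
  then have "shift_level n ` F n = F n"
    using \<open>n \<in> I\<close> by (rule act_nat_sets_graph_on_fixed)
  moreover have "finite (F n)" "F n \<noteq> {}" "F n \<subseteq> Alev n"
    using pmcf \<open>n \<in> I\<close> unfolding pmcf_def by auto
  ultimately show False
    using shift_level_image_neq by blast
qed

lemma in_NR_graph_singletons:
  assumes "in_NR_pure_atom (graph_on I c)"
  shows "in_NR_nat_sets (graph_on I (\<lambda>n. {c n}))"
proof -
  obtain S where "finite S"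
    and supported: "\<forall>\<pi>\<in>fixlev S. act_pure_atom \<pi> (graph_on I c) = graph_on I c"
    using assms unfolding in_NR_pure_atom_def by blast
  have "act_nat_sets \<pi> (graph_on I (\<lambda>n. {c n})) = graph_on I (\<lambda>n. {c n})"
    if "\<pi> \<in> fixlev S" for \<pi>
  proof -
    have "\<pi> (c n) = c n" if "n \<in> I" for n
      using supported \<open>\<pi> \<in> fixlev S\<close> that by (blast intro: act_pure_atom_graph_on_fixed)
    then show ?thesis
      unfolding act_nat_sets_def graph_on_def by (force simp: image_iff)
  qed
  with \<open>finite S\<close> show ?thesis
    unfolding in_NR_nat_sets_def graph_on_def by auto
qed

theorem proposition3p9:
  shows
   \<comment> \<open>the family is denumerable in N_R: the enumeration n |-> A_n is injective and fixed by all of G\<close>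
   "inj Alev \<and> (\<forall>\<pi>\<in>Gperm. \<forall>n. \<pi> ` Alev n = Alev n)
    \<comment> \<open>each A_n is equipotent (in N_R) to the reals\<close>
    \<and> (\<forall>n. \<exists>h. bij_betw h (UNIV :: real set) (Alev n) \<and> in_NR_pure_atom (graph_on UNIV h))
    \<comment> \<open>no partial multiple choice function lies in N_R\<close>
    \<and> \<not> (\<exists>I F. pmcf I F \<and> in_NR_nat_sets (graph_on I F))
    \<comment> \<open>hence CAC(<= 2^aleph_0) fails: this family has no choice function in N_R\<close>
    \<and> \<not> (\<exists>c. (\<forall>n. c n \<in> Alev n) \<and> in_NR_pure_atom (graph_on (UNIV :: nat set) c))"
proof (intro conjI)
  show "inj Alev"
    by (rule injI) (auto simp: Alev_def set_eq_iff)
  show "\<forall>\<pi>\<in>Gperm. \<forall>n. \<pi> ` Alev n = Alev n"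
    using Gperm_image_Alev by blast
  show "\<forall>n. \<exists>h. bij_betw h (UNIV :: real set) (Alev n) \<and> in_NR_pure_atom (graph_on UNIV h)"
    using bij_betw_Pair_Alev in_NR_graph_Pair by blast
  show "\<not> (\<exists>I F. pmcf I F \<and> in_NR_nat_sets (graph_on I F))"
    by (rule no_pmcf_in_NR)
  show "\<not> (\<exists>c. (\<forall>n. c n \<in> Alev n) \<and> in_NR_pure_atom (graph_on (UNIV :: nat set) c))"
  proof
    assume "\<exists>c. (\<forall>n. c n \<in> Alev n) \<and> in_NR_pure_atom (graph_on (UNIV :: nat set) c)"
    then obtain c where "\<forall>n. c n \<in> Alev n" "in_NR_pure_atom (graph_on (UNIV :: nat set) c)"
      by blast
    then have "pmcf UNIV (\<lambda>n. {c n})" "in_NR_nat_sets (graph_on UNIV (\<lambda>n. {c n}))"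
      by (auto simp: pmcf_def in_NR_graph_singletons)
    with no_pmcf_in_NR show False by blast
  qed
qed

end
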